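(* Let $M$ be a connected split matroid of rank $k$ on $E=[n]$, and let $F$ and $G$ be two distinct proper cyclic flats of $M$ of ranks $r$ and $s$. Set $Q=\Delta_{k,n}\cap H^+(F,r)\cap H^+(G,s)$, $\alpha=|F\setminus G|$, $\beta=|G\setminus F|$, $\gamma=|F\cap G|$. If $F$ and $G$ form a modular pair, then \[ Q=\Delta_{\gamma,F\cap G}\times\Delta_{r-\gamma,F\setminus G}\times\Delta_{s-\gamma,G\setminus F}\times\Delta_{0,E\setminus(F\cup G)}\cong\Delta_{r-\gamma,\alpha}\times\Delta_{s-\gamma,\beta}, \] and $Q$ coincides with $\Delta_{k,n}\cap H(F,r)\cap H(G,s)$. Otherwise, $Q$ is empty.
   Context: For $A\subseteq E$ and $r\in\mathbb R$, $H^+(A,r)=\{x\in\mathbb R^E:\sum_{i\in A}x_i\ge r\}$, $H^-(A,r)=\{x:\sum_{i\in A}x_i\le r\}$ and $H(A,r)=H^+(A,r)\cap H^-(A,r)$. For a finite set $S$, $\Delta_{m,S}\subset\mathbb R^S$ is the convex hull of indicator vectors of $m$-subsets of $S$ and $\Delta_{m,N}=\Delta_{m,[N]}$; products over disjoint sets partitioning $E$ are regarded as subsets of $\mathbb R^E$. A cyclic flat is a flat that is a union of circuits; $(F,G)$ is a modular pair if $\mathrm{rk}F+\mathrm{rk}G=\mathrm{rk}(F\cup G)+\mathrm{rk}(F\cap G)$. A subset $A$ is stressed if $M|A$ and $M/A$ are uniform; its cover is the set of $k$-subsets $B$ with $|B\cap A|\ge \mathrm{rk}(A)+1$; relaxing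 $A$ means adding its cover to the set of bases. A connected matroid is split if relaxing all stressed subsets with nonempty cover yields a uniform matroid. *)

theory Defs
  imports Main "HOL-Library.Indicator_Function"
begin

definition matroid :: "'a set \<Rightarrow> 'a set set \<Rightarrow> bool" where
  "matroid E \<B> \<longleftrightarrow> finite E \<and> \<B> \<noteq> {} \<and> (\<forall>X\<in>\<B>. X \<subseteq> E) \<and>
     (\<forall>X\<in>\<B>. \<forall>Y\<in>\<B>. \<forall>x\<in>X - Y. \<exists>y\<in>Y - X. insert y (X - {x}) \<in> \<B>)"

definition indep :: "'a set set \<Rightarrow> 'a set \<Rightarrow> bool" where
  "indep \<B> I \<longleftrightarrow> (\<exists>X\<in>\<B>. I \<subseteq> X)"

definition rk :: "'a set set \<Rightarrow> 'a set \<Rightarrow> nat" where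
  "rk \<B> A = Max ((\<lambda>X. card (A \<inter> X)) ` \<B>)"

definition circuit :: "'a set \<Rightarrow> 'a set set \<Rightarrow> 'a set \<Rightarrow> bool" where
  "circuit E \<B> C \<longleftrightarrow> C \<subseteq> E \<and> \<not> indep \<B> C \<and> (\<forall>D. D \<subset> C \<longrightarrow> indep \<B> D)"

definition flat :: "'a set \<Rightarrow> 'a set set \<Rightarrow> 'a set \<Rightarrow> bool" where
  "flat E \<B> F \<longleftrightarrow> F \<subseteq> E \<and> (\<forall>e\<in>E - F. rk \<B> (insert e F) > rk \<B> F)"

definition cyclic_flat :: "'a set \<Rightarrow> 'a set set \<Rightarrow> 'a set \<Rightarrow> bool" where
  "cyclic_flat E \<B> F \<longleftrightarrow> flat E \<B> F \<and> F = \<Union>{C. circuit E \<B> C \<and> C \<subseteq> F}"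

definition proper_cyclic_flat :: "'a set \<Rightarrow> 'a set set \<Rightarrow> 'a set \<Rightarrow> bool" where
  "proper_cyclic_flat E \<B> F \<longleftrightarrow> cyclic_flat E \<B> F \<and> F \<noteq> {} \<and> F \<noteq> E"

definition connected_matroid :: "'a set \<Rightarrow> 'a set set \<Rightarrow> bool" where
  "connected_matroid E \<B> \<longleftrightarrow> matroid E \<B> \<and>
     (\<forall>e\<in>E. \<forall>f\<in>E. e \<noteq> f \<longrightarrow> (\<exists>C. circuit E \<B> C \<and> e \<in> C \<and> f \<in> C))"

definition modular_pair :: "'a set set \<Rightarrow> 'a set \<Rightarrow> 'a set \<Rightarrow> bool" where
  "modular_pair \<B> F G \<longleftrightarrow> rk \<B> F + rk \<B> G = rk \<B> (F \<union> G) + rk \<B> (F \<inter> G)"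

text \<open>Bases of the restriction M|A (ground set A) and of the contraction M/A (ground set E - A).\<close>
definition restr_bases :: "'a set set \<Rightarrow> 'a set \<Rightarrow> 'a set set" where
  "restr_bases \<B> A = {X. X \<subseteq> A \<and> indep \<B> X \<and> card X = rk \<B> A}"

definition contr_bases :: "'a set \<Rightarrow> 'a set set \<Rightarrow> 'a set \<Rightarrow> 'a set set" where
  "contr_bases E \<B> A = {X. X \<subseteq> E - A \<and> (\<exists>I\<in>restr_bases \<B> A. X \<union> I \<in> \<B>)}"

definition uniform_on :: "'a set \<Rightarrow> 'a set set \<Rightarrow> bool" where
  "uniform_on S Bs \<longleftrightarrow> (\<exists>m. Bs = {X. X \<subseteq> S \<and> card X = m})"

definition stressed :: "'a set \<Rightarrow> 'a set set \<Rightarrow> 'a set \<Rightarrow> bool" where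
  "stressed E \<B> A \<longleftrightarrow> A \<subseteq> E \<and> uniform_on A (restr_bases \<B> A) \<and> uniform_on (E - A) (contr_bases E \<B> A)"

definition cover :: "'a set \<Rightarrow> 'a set set \<Rightarrow> 'a set \<Rightarrow> 'a set set" where
  "cover E \<B> A = {X. X \<subseteq> E \<and> card X = rk \<B> E \<and> card (X \<inter> A) \<ge> rk \<B> A + 1}"

definition relax_all :: "'a set \<Rightarrow> 'a set set \<Rightarrow> 'a set set" where
  "relax_all E \<B> = \<B> \<union> \<Union>{cover E \<B> A | A. stressed E \<B> A \<and> cover E \<B> A \<noteq> {}}"

definition split_matroid :: "'a set \<Rightarrow> 'a set set \<Rightarrow> bool" where
  "split_matroid E \<B> \<longleftrightarrow> connected_matroid E \<B> \<and> uniform_on E (relax_all E \<B>)"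

text \<open>Points of R^S are functions 'a => real vanishing outside S.
  hypersimplex m S = convex hull of indicator vectors of m-subsets of S (finite S),
  written out as the set of convex combinations of these finitely many vectors.\<close>
definition hypersimplex :: "int \<Rightarrow> 'a set \<Rightarrow> ('a \<Rightarrow> real) set" where
  "hypersimplex m S =
     {x. \<exists>c :: 'a set \<Rightarrow> real. (\<forall>B. c B \<ge> 0) \<and>
          (\<Sum>B\<in>{B. B \<subseteq> S \<and> int (card B) = m}. c B) = 1 \<and>
          x = (\<lambda>i. \<Sum>B\<in>{B. B \<subseteq> S \<and> int (card B) = m}. c B * indicator B i)}"

definition Hge :: "'a set \<Rightarrow> real \<Rightarrow> ('a \<Rightarrow> real) set" where
  "Hge A r = {x. (\<Sum>i\<in>A. x i) \<ge> r}"

definition Hle :: "'a set \<Rightarrow> real \<Rightarrow> ('a \<Rightarrow> real) set" where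
  "Hle A r = {x. (\<Sum>i\<in>A. x i) \<le> r}"

definition Heq :: "'a set \<Rightarrow> real \<Rightarrow> ('a \<Rightarrow> real) set" where
  "Heq A r = Hge A r \<inter> Hle A r"

definition restr :: "'a set \<Rightarrow> ('a \<Rightarrow> real) \<Rightarrow> ('a \<Rightarrow> real)" where
  "restr S x = (\<lambda>i. if i \<in> S then x i else 0)"

text \<open>Product of hypersimplices Delta_{m_j,S_j} over disjoint sets S_j, as a subset of R^(union S_j).\<close>
definition simplex_product :: "(int \<times> 'a set) list \<Rightarrow> ('a \<Rightarrow> real) set" where
  "simplex_product ps =
     {x. (\<forall>i. i \<notin> (\<Union>p\<in>set ps. snd p) \<longrightarrow> x i = 0) \<and>
         (\<forall>p\<in>set ps. restr (snd p) x \<in> hypersimplex (fst p) (snd p))}"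

end

theory Submission
  imports Defs
begin

text \<open>For x in the hypersimplex \<open>\<Delta>(k, E)\<close> we have \<open>x(F) + x(G) = x(F \<union> G) + x(F \<inter> G) \<le> k + |F \<inter> G|\<close>,
  with equality iff x is 1 on \<open>F \<inter> G\<close> and 0 outside \<open>F \<union> G\<close>. In a split matroid two distinct
  proper cyclic flats are stressed, their intersection is independent and their union spans, so
  submodularity gives \<open>r + s \<ge> k + |F \<inter> G|\<close>, with equality exactly for modular pairs. Hence Q is
  empty for a non-modular pair, while for a modular pair every point of Q is pinned on \<open>F \<inter> G\<close> and
  outside \<open>F \<union> G\<close>, leaving independent hypersimplices on \<open>F - G\<close> and \<open>G - F\<close>.
  Throughout, the hypersimplex is used through its description as the slice
  \<open>{0 \<le> x \<le> 1, \<Sum>x = m}\<close> of the unit cube, proved by shifting mass between fractional coordinates.\<close>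

section \<open>Hypersimplices as slices of the unit cube\<close>

definition cube_slice :: "int \<Rightarrow> 'a set \<Rightarrow> ('a \<Rightarrow> real) set" where
  "cube_slice m S =
     {x. (\<forall>i. i \<notin> S \<longrightarrow> x i = 0) \<and> (\<forall>i\<in>S. 0 \<le> x i \<and> x i \<le> 1) \<and> (\<Sum>i\<in>S. x i) = of_int m}"

definition fractional_coords :: "'a set \<Rightarrow> ('a \<Rightarrow> real) \<Rightarrow> 'a set" where
  "fractional_coords S x = {i\<in>S. 0 < x i \<and> x i < 1}"

lemma hypersimplex_subset_cube_slice:
  assumes "finite S"
  shows "hypersimplex m S \<subseteq> cube_slice m S"
proof
  fix x assume "x \<in> hypersimplex m S"
  let ?K = "{B. B \<subseteq> S \<and> int (card B) = m}"
  obtain c where c_nonneg: "\<forall>B. c B \<ge> 0" and c_sum: "(\<Sum>B\<in>?K. c B) = 1"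
    and x: "x = (\<lambda>i. \<Sum>B\<in>?K. c B * indicator B i)"
    using \<open>x \<in> hypersimplex m S\<close> unfolding hypersimplex_def by blast
  have "x i = 0" if "i \<notin> S" for i
    unfolding x using that by (intro sum.neutral) (auto simp: indicator_def)
  moreover have "0 \<le> x i \<and> x i \<le> 1" for i
  proof
    show "0 \<le> x i" unfolding x using c_nonneg by (intro sum_nonneg) simp
    have "x i \<le> (\<Sum>B\<in>?K. c B)"
      unfolding x using c_nonneg by (intro sum_mono) (simp add: indicator_def)
    then show "x i \<le> 1" using c_sum by simp
  qed
  moreover have "(\<Sum>i\<in>S. x i) = of_int m"
  proof -
    have "(\<Sum>i\<in>S. x i) = (\<Sum>B\<in>?K. c B * (\<Sum>i\<in>S. indicator B i))"
      unfolding x by (subst sum.swap) (simp add: sum_distrib_left)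
    also have "\<dots> = (\<Sum>B\<in>?K. c B * of_int m)"
    proof (rule sum.cong [OF refl])
      fix B assume "B \<in> ?K"
      then have "(\<Sum>i\<in>S. indicator B i :: real) = real (card B)" "of_int m = real (card B)"
        using assms by (auto simp: indicator_def sum.If_cases Int_absorb1)
      then show "c B * (\<Sum>i\<in>S. indicator B i) = c B * of_int m" by simp
    qed
    also have "\<dots> = of_int m" using c_sum by (simp flip: sum_distrib_right)
    finally show ?thesis .
  qed
  ultimately show "x \<in> cube_slice m S" unfolding cube_slice_def by blast
qed

lemma convex_comb_in_hypersimplex:
  assumes "x \<in> hypersimplex m S" "y \<in> hypersimplex m S" "0 \<le> t" "t \<le> 1"
  shows "(\<lambda>i. t * x i + (1 - t) * y i) \<in> hypersimplex m S"
proof -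
  let ?K = "{B. B \<subseteq> S \<and> int (card B) = m}"
  obtain c where c: "\<forall>B. c B \<ge> 0" "(\<Sum>B\<in>?K. c B) = 1"
    and x: "x = (\<lambda>i. \<Sum>B\<in>?K. c B * indicator B i)"
    using assms(1) unfolding hypersimplex_def by blast
  obtain d where d: "\<forall>B. d B \<ge> 0" "(\<Sum>B\<in>?K. d B) = 1"
    and y: "y = (\<lambda>i. \<Sum>B\<in>?K. d B * indicator B i)"
    using assms(2) unfolding hypersimplex_def by blast
  let ?e = "\<lambda>B. t * c B + (1 - t) * d B"
  have "\<forall>B. ?e B \<ge> 0" using c d assms(3,4) by simp
  moreover have "(\<Sum>B\<in>?K. ?e B) = 1"
    by (simp add: sum.distrib c d flip: sum_distrib_left)
  moreover have "(\<lambda>i. t * x i + (1 - t) * y i) = (\<lambda>i. \<Sum>B\<in>?K. ?e B * indicator B i)"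
    unfolding x y by (simp add: distrib_right sum.distrib sum_distrib_left mult.assoc)
  ultimately show ?thesis unfolding hypersimplex_def by (intro CollectI exI [of _ ?e]) blast
qed

lemma indicator_in_hypersimplex:
  assumes "finite S" "B \<subseteq> S" "int (card B) = m"
  shows "indicator B \<in> hypersimplex m S"
proof -
  let ?K = "{B. B \<subseteq> S \<and> int (card B) = m}"
  let ?c = "\<lambda>B'. if B' = B then 1 else 0 :: real"
  have "finite ?K" using assms(1) by simp
  moreover have "B \<in> ?K" using assms by simp
  ultimately have "(\<Sum>B'\<in>?K. ?c B' * indicator B' i) = indicator B i" for i :: 'a
    by (simp add: if_distrib [of "\<lambda>c. c * _"] sum.delta' cong: if_cong)
  moreover have "(\<Sum>B'\<in>?K. ?c B') = 1"
    using \<open>finite ?K\<close> \<open>B \<in> ?K\<close> by simp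
  ultimately show ?thesis
    unfolding hypersimplex_def by (intro CollectI exI [of _ ?c]) auto
qed

lemma integral_cube_slice_point_in_hypersimplex:
  assumes "finite S" "x \<in> cube_slice m S" "fractional_coords S x = {}"
  shows "x \<in> hypersimplex m S"
proof -
  let ?B = "{i\<in>S. x i = 1}"
  have x: "x = indicator ?B"
  proof
    fix i show "x i = indicator ?B i"
      using assms(2,3) unfolding cube_slice_def fractional_coords_def indicator_def
      by (cases "i \<in> S") force+
  qed
  have "of_int m = (\<Sum>i\<in>S. indicator ?B i :: real)"
    using assms(2) unfolding cube_slice_def by (simp flip: x)
  also have "\<dots> = of_int (int (card ?B))"
    using assms(1) by (simp add: indicator_def sum.If_cases Int_def)
  finally have "int (card ?B) = m" by linarith
  then show ?thesis by (subst x) (rule indicator_in_hypersimplex [OF assms(1)]; simp)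
qed

lemma fractional_coords_not_singleton:
  assumes "finite S" "x \<in> cube_slice m S" "i \<in> fractional_coords S x"
  obtains j where "j \<in> fractional_coords S x" "j \<noteq> i"
proof -
  have "\<exists>j\<in>fractional_coords S x. j \<noteq> i"
  proof (rule ccontr)
    assume no_other: "\<not> (\<exists>j\<in>fractional_coords S x. j \<noteq> i)"
    have "x j \<in> \<int>" if "j \<in> S - {i}" for j
    proof -
      have "x j = 0 \<or> x j = 1"
        using assms(2) that no_other unfolding cube_slice_def fractional_coords_def by force
      then show ?thesis by auto
    qed
    then have "(\<Sum>j\<in>S - {i}. x j) \<in> \<int>" by (rule Ints_sum)
    moreover have "x i = of_int m - (\<Sum>j\<in>S - {i}. x j)"
      using assms sum.remove [OF assms(1), of i x] unfolding cube_slice_def fractional_coords_def by simp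
    ultimately have "x i \<in> \<int>" by simp
    moreover have "0 < x i" "x i < 1" using assms(3) unfolding fractional_coords_def by auto
    ultimately show False using Ints_nonzero_abs_less1 by force
  qed
  then show thesis using that by blast
qed

lemma mass_transfer_in_cube_slice:
  assumes "finite S" "x \<in> cube_slice m S" "i \<in> fractional_coords S x" "j \<in> fractional_coords S x" "i \<noteq> j"
  defines "y \<equiv> x(i := x i + min (1 - x i) (x j), j := x j - min (1 - x i) (x j))"
  shows "y \<in> cube_slice m S" "fractional_coords S y \<subset> fractional_coords S x"
proof -
  have i: "i \<in> S" "0 < x i" "x i < 1" and j: "j \<in> S" "0 < x j" "x j < 1"
    using assms(3,4) unfolding fractional_coords_def by auto
  have "(\<Sum>l\<in>S. f l) = f i + f j + (\<Sum>l\<in>S - {i} - {j}. f l)" for f :: "'a \<Rightarrow> real"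
    using assms(1,5) i(1) j(1) by (simp add: sum.remove)
  moreover have "(\<Sum>l\<in>S - {i} - {j}. y l) = (\<Sum>l\<in>S - {i} - {j}. x l)"
    unfolding y_def by (intro sum.cong) auto
  moreover have "y i + y j = x i + x j" unfolding y_def using assms(5) by simp
  ultimately have "(\<Sum>l\<in>S. y l) = (\<Sum>l\<in>S. x l)" by metis
  then show "y \<in> cube_slice m S"
    using assms(2,5) i j unfolding cube_slice_def y_def by auto
  have "y l = x l" if "l \<noteq> i" "l \<noteq> j" for l
    unfolding y_def using that by simp
  then have "fractional_coords S y \<subseteq> fractional_coords S x"
    using assms(3,4) unfolding fractional_coords_def by fastforce
  moreover have "y i = 1 \<or> y j = 0"
    unfolding y_def using assms(5) by (simp add: min_def)
  then have "i \<notin> fractional_coords S y \<or> j \<notin> fractional_coords S y"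
    unfolding fractional_coords_def by auto
  ultimately show "fractional_coords S y \<subset> fractional_coords S x"
    using assms(3,4) by blast
qed

lemma mem_hypersimplex_between_transfers:
  assumes "x(i := x i + d1, j := x j - d1) \<in> hypersimplex m S" (is "?y1 \<in> _")
    and "x(j := x j + d2, i := x i - d2) \<in> hypersimplex m S" (is "?y2 \<in> _")
    and "j \<noteq> i" "d1 > 0" "d2 > 0"
  shows "x \<in> hypersimplex m S"
proof -
  define t where "t = d2 / (d1 + d2)"
  have t: "0 \<le> t" "t \<le> 1" unfolding t_def using assms(4,5) by auto
  have "t * d1 = (1 - t) * d2" unfolding t_def using assms(4,5) by (simp add: field_simps)
  then have "t * (a + d1) + (1 - t) * (a - d2) = a" "t * (a - d1) + (1 - t) * (a + d2) = a"
    "t * a + (1 - t) * a = a" for a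
    by (simp_all add: algebra_simps)
  then have "x l = t * ?y1 l + (1 - t) * ?y2 l" for l
    using assms(3) by (cases "l = i"; cases "l = j") simp_all
  then have "x = (\<lambda>l. t * ?y1 l + (1 - t) * ?y2 l)" by blast
  with convex_comb_in_hypersimplex [OF assms(1,2) t] show ?thesis by simp
qed

lemma cube_slice_subset_hypersimplex:
  assumes "finite S"
  shows "cube_slice m S \<subseteq> hypersimplex m S"
proof
  fix x assume "x \<in> cube_slice m S"
  then show "x \<in> hypersimplex m S"
  proof (induction "card (fractional_coords S x)" arbitrary: x rule: less_induct)
    case less
    have IH: "y \<in> hypersimplex m S"
      if "y \<in> cube_slice m S" "fractional_coords S y \<subset> fractional_coords S x" for y
    proof -
      have "finite (fractional_coords S x)" using assms by (simp add: fractional_coords_def)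
      then show ?thesis by (rule less.hyps [OF psubset_card_mono [OF _ that(2)] that(1)])
    qed
    show ?case
    proof (cases "fractional_coords S x = {}")
      case True
      then show ?thesis by (rule integral_cube_slice_point_in_hypersimplex [OF assms less.prems])
    next
      case False
      then obtain i where i: "i \<in> fractional_coords S x" by blast
      obtain j where j: "j \<in> fractional_coords S x" "j \<noteq> i"
        by (rule fractional_coords_not_singleton [OF assms less.prems i])
      define d1 where "d1 = min (1 - x i) (x j)"
      define d2 where "d2 = min (1 - x j) (x i)"
      have "x(i := x i + d1, j := x j - d1) \<in> hypersimplex m S"
        unfolding d1_def
        by (rule IH [OF mass_transfer_in_cube_slice [OF assms less.prems i j(1) j(2) [symmetric]]])
      moreover have "x(j := x j + d2, i := x i - d2) \<in> hypersimplex m S"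
        unfolding d2_def by (rule IH [OF mass_transfer_in_cube_slice [OF assms less.prems j(1) i j(2)]])
      moreover have "d1 > 0" "d2 > 0"
        using i j unfolding d1_def d2_def fractional_coords_def by auto
      ultimately show ?thesis using mem_hypersimplex_between_transfers j(2) by metis
    qed
  qed
qed

lemma hypersimplex_eq_cube_slice:
  "finite S \<Longrightarrow> hypersimplex m S = cube_slice m S"
  using hypersimplex_subset_cube_slice cube_slice_subset_hypersimplex by blast

lemma restr_in_hypersimplex_iff:
  assumes "finite S"
  shows "restr S x \<in> hypersimplex m S \<longleftrightarrow> (\<forall>i\<in>S. 0 \<le> x i \<and> x i \<le> 1) \<and> (\<Sum>i\<in>S. x i) = of_int m"
proof -
  have "(\<Sum>i\<in>S. restr S x i) = (\<Sum>i\<in>S. x i)" unfolding restr_def by (rule sum.cong) auto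
  then show ?thesis
    unfolding hypersimplex_eq_cube_slice [OF assms] cube_slice_def by (auto simp: restr_def)
qed

lemma restr_in_hypersimplex_card_iff:
  assumes "finite S"
  shows "restr S x \<in> hypersimplex (int (card S)) S \<longleftrightarrow> (\<forall>i\<in>S. x i = 1)"
proof -
  have "(\<forall>i\<in>S. x i \<le> 1) \<and> (\<Sum>i\<in>S. x i) = real (card S) \<longleftrightarrow> (\<forall>i\<in>S. x i = 1)"
    using sum_nonneg_eq_0_iff [OF assms, of "\<lambda>i. 1 - x i"] by (auto simp: sum_subtractf)
  then show ?thesis unfolding restr_in_hypersimplex_iff [OF assms] by auto
qed

lemma restr_in_hypersimplex_zero_iff:
  assumes "finite S"
  shows "restr S x \<in> hypersimplex 0 S \<longleftrightarrow> (\<forall>i\<in>S. x i = 0)"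
  unfolding restr_in_hypersimplex_iff [OF assms] using sum_nonneg_eq_0_iff [OF assms, of x] by auto

lemma restr_comp_in_hypersimplex:
  assumes "bij_betw \<sigma> S' S" "finite S" "y \<in> hypersimplex m S"
  shows "restr S' (y \<circ> \<sigma>) \<in> hypersimplex m S'"
proof -
  have "finite S'" using bij_betw_finite [OF assms(1)] assms(2) by simp
  have "(\<Sum>j\<in>S'. y (\<sigma> j)) = (\<Sum>i\<in>S. y i)" by (rule sum.reindex_bij_betw [OF assms(1)])
  moreover have "\<sigma> j \<in> S" if "j \<in> S'" for j using assms(1) that by (rule bij_betw_apply)
  ultimately show ?thesis
    using assms(3) unfolding restr_in_hypersimplex_iff [OF \<open>finite S'\<close>]
    by (simp add: hypersimplex_eq_cube_slice [OF assms(2)] cube_slice_def)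
qed

lemma hypersimplex_relabel:
  assumes "bij_betw \<sigma> S' S" "finite S"
  shows "bij_betw (\<lambda>y. restr S' (y \<circ> \<sigma>)) (hypersimplex m S) (hypersimplex m S')"
proof (rule bij_betw_byWitness [where f' = "\<lambda>y. restr S (y \<circ> inv_into S' \<sigma>)"])
  have \<sigma>': "bij_betw (inv_into S' \<sigma>) S S'" by (rule bij_betw_inv_into [OF assms(1)])
  have "finite S'" using bij_betw_finite [OF assms(1)] assms(2) by simp
  show "\<forall>y\<in>hypersimplex m S. restr S (restr S' (y \<circ> \<sigma>) \<circ> inv_into S' \<sigma>) = y"
    using assms \<sigma>' bij_betw_apply [OF \<sigma>']
    by (auto simp: hypersimplex_eq_cube_slice cube_slice_def restr_def bij_betw_def f_inv_into_f)
  show "\<forall>y\<in>hypersimplex m S'. restr S' (restr S (y \<circ> inv_into S' \<sigma>) \<circ> \<sigma>) = y"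
    using \<open>finite S'\<close> assms(1) bij_betw_apply [OF assms(1)]
    by (auto simp: hypersimplex_eq_cube_slice cube_slice_def restr_def bij_betw_def)
  show "(\<lambda>y. restr S' (y \<circ> \<sigma>)) ` hypersimplex m S \<subseteq> hypersimplex m S'"
    using restr_comp_in_hypersimplex [OF assms] by blast
  show "(\<lambda>y. restr S (y \<circ> inv_into S' \<sigma>)) ` hypersimplex m S' \<subseteq> hypersimplex m S"
    using restr_comp_in_hypersimplex [OF \<sigma>' \<open>finite S'\<close>] by blast
qed

lemma hypersimplex_vanishes:
  assumes "finite S" "y \<in> hypersimplex m S" "i \<notin> S"
  shows "y i = 0"
  using assms by (auto simp: hypersimplex_eq_cube_slice cube_slice_def)

lemma hypersimplex_pair_split:
  assumes "finite A" "finite B" "A \<inter> B = {}"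
  shows "bij_betw (\<lambda>x. (restr A x, restr B x))
     {x. (\<forall>i. i \<notin> A \<union> B \<longrightarrow> x i = z i) \<and> restr A x \<in> hypersimplex m A \<and> restr B x \<in> hypersimplex m' B}
     (hypersimplex m A \<times> hypersimplex m' B)"
proof (rule bij_betw_byWitness [where f' = "\<lambda>(u, v) i. if i \<in> A then u i else if i \<in> B then v i else z i"])
  have "restr A (\<lambda>i. if i \<in> A then u i else if i \<in> B then v i else z i) = u"
    and "restr B (\<lambda>i. if i \<in> A then u i else if i \<in> B then v i else z i) = v"
    if "u \<in> hypersimplex m A" "v \<in> hypersimplex m' B" for u v
    using hypersimplex_vanishes [OF assms(1) that(1)] hypersimplex_vanishes [OF assms(2) that(2)] assms(3)
    by (auto simp: restr_def fun_eq_iff)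
  then show "\<forall>p\<in>hypersimplex m A \<times> hypersimplex m' B.
      (\<lambda>x. (restr A x, restr B x)) ((\<lambda>(u, v) i. if i \<in> A then u i else if i \<in> B then v i else z i) p) = p"
    and "(\<lambda>(u, v) i. if i \<in> A then u i else if i \<in> B then v i else z i) ` (hypersimplex m A \<times> hypersimplex m' B)
      \<subseteq> {x. (\<forall>i. i \<notin> A \<union> B \<longrightarrow> x i = z i) \<and> restr A x \<in> hypersimplex m A \<and> restr B x \<in> hypersimplex m' B}"
    by auto
qed (auto simp: restr_def)

lemma hypersimplex_pair_relabel:
  assumes "bij_betw \<sigma> A' A" "bij_betw \<tau> B' B" "finite A" "finite B" "A \<inter> B = {}"
  shows "bij_betw (\<lambda>x. (restr A' (x \<circ> \<sigma>), restr B' (x \<circ> \<tau>)))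
     {x. (\<forall>i. i \<notin> A \<union> B \<longrightarrow> x i = z i) \<and> restr A x \<in> hypersimplex m A \<and> restr B x \<in> hypersimplex m' B}
     (hypersimplex m A' \<times> hypersimplex m' B')"
proof -
  have "bij_betw (map_prod (\<lambda>u. restr A' (u \<circ> \<sigma>)) (\<lambda>v. restr B' (v \<circ> \<tau>)) \<circ> (\<lambda>x. (restr A x, restr B x)))
     {x. (\<forall>i. i \<notin> A \<union> B \<longrightarrow> x i = z i) \<and> restr A x \<in> hypersimplex m A \<and> restr B x \<in> hypersimplex m' B}
     (hypersimplex m A' \<times> hypersimplex m' B')"
    using hypersimplex_pair_split [OF assms(3-5)]
      bij_betw_map_prod [OF hypersimplex_relabel [OF assms(1,3)] hypersimplex_relabel [OF assms(2,4)]]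
    by (rule bij_betw_trans)
  moreover have "restr A' (restr A x \<circ> \<sigma>) = restr A' (x \<circ> \<sigma>)" "restr B' (restr B x \<circ> \<tau>) = restr B' (x \<circ> \<tau>)" for x
    using bij_betw_apply [OF assms(1)] bij_betw_apply [OF assms(2)] by (auto simp: restr_def)
  ultimately show ?thesis by (simp add: comp_def)
qed

section \<open>Two half-spaces cutting a hypersimplex\<close>

lemma sum_Venn_split:
  fixes x :: "'a \<Rightarrow> real"
  assumes "finite E" "F \<subseteq> E" "G \<subseteq> E"
  shows "(\<Sum>i\<in>F. x i) = (\<Sum>i\<in>F \<inter> G. x i) + (\<Sum>i\<in>F - G. x i)"
    and "(\<Sum>i\<in>G. x i) = (\<Sum>i\<in>F \<inter> G. x i) + (\<Sum>i\<in>G - F. x i)"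
    and "(\<Sum>i\<in>E. x i) =
      (\<Sum>i\<in>F \<inter> G. x i) + (\<Sum>i\<in>F - G. x i) + (\<Sum>i\<in>G - F. x i) + (\<Sum>i\<in>E - (F \<union> G). x i)"
proof -
  have fin: "finite F" "finite G" using assms finite_subset by auto
  show F: "(\<Sum>i\<in>F. x i) = (\<Sum>i\<in>F \<inter> G. x i) + (\<Sum>i\<in>F - G. x i)"
    using sum.Int_Diff [OF fin(1)] .
  show "(\<Sum>i\<in>G. x i) = (\<Sum>i\<in>F \<inter> G. x i) + (\<Sum>i\<in>G - F. x i)"
    using sum.Int_Diff [OF fin(2), of x F] by (simp add: Int_commute)
  have "(\<Sum>i\<in>E. x i) = (\<Sum>i\<in>F \<union> G. x i) + (\<Sum>i\<in>E - (F \<union> G). x i)"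
    using sum.subset_diff [of "F \<union> G" E x] assms by simp
  moreover have "(\<Sum>i\<in>F \<union> G. x i) = (\<Sum>i\<in>F. x i) + (\<Sum>i\<in>G - F. x i)"
    using sum.union_disjoint [of F "G - F" x] fin by (simp add: Un_Diff_cancel)
  ultimately show "(\<Sum>i\<in>E. x i) =
      (\<Sum>i\<in>F \<inter> G. x i) + (\<Sum>i\<in>F - G. x i) + (\<Sum>i\<in>G - F. x i) + (\<Sum>i\<in>E - (F \<union> G). x i)"
    using F by simp
qed

text \<open>The gap is exactly the slack \<open>\<Sum>i\<in>F \<inter> G. 1 - x i\<close> plus the mass outside \<open>F \<union> G\<close>.\<close>
lemma cube_slice_sum_pair_le:
  fixes x :: "'a \<Rightarrow> real"
  assumes "finite E" "F \<subseteq> E" "G \<subseteq> E" "x \<in> cube_slice m E"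
  shows "(\<Sum>i\<in>F. x i) + (\<Sum>i\<in>G. x i) \<le> of_int m + card (F \<inter> G)"
    and "(\<Sum>i\<in>F. x i) + (\<Sum>i\<in>G. x i) = of_int m + card (F \<inter> G) \<Longrightarrow>
      (\<forall>i\<in>F \<inter> G. x i = 1) \<and> (\<forall>i\<in>E - (F \<union> G). x i = 0)"
proof -
  have box: "\<forall>i\<in>E. 0 \<le> x i \<and> x i \<le> 1" and total: "(\<Sum>i\<in>E. x i) = of_int m"
    using assms(4) unfolding cube_slice_def by blast+
  have fin: "finite (F \<inter> G)" "finite (E - (F \<union> G))" using assms(1,2) by (auto intro: finite_subset)
  have slack_FG: "0 \<le> (\<Sum>i\<in>F \<inter> G. 1 - x i)" and slack_out: "0 \<le> (\<Sum>i\<in>E - (F \<union> G). x i)"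
    using box assms(2,3) by (auto intro!: sum_nonneg)
  have eq: "(\<Sum>i\<in>F. x i) + (\<Sum>i\<in>G. x i) + (\<Sum>i\<in>F \<inter> G. 1 - x i) + (\<Sum>i\<in>E - (F \<union> G). x i)
      = of_int m + card (F \<inter> G)"
    using sum_Venn_split [OF assms(1-3), of x] total by (simp add: sum_subtractf)
  then show "(\<Sum>i\<in>F. x i) + (\<Sum>i\<in>G. x i) \<le> of_int m + card (F \<inter> G)"
    using slack_FG slack_out by linarith
  assume "(\<Sum>i\<in>F. x i) + (\<Sum>i\<in>G. x i) = of_int m + card (F \<inter> G)"
  then have "(\<Sum>i\<in>F \<inter> G. 1 - x i) = 0" "(\<Sum>i\<in>E - (F \<union> G). x i) = 0"
    using eq slack_FG slack_out by linarith+
  then show "(\<forall>i\<in>F \<inter> G. x i = 1) \<and> (\<forall>i\<in>E - (F \<union> G). x i = 0)"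
    using box assms(2,3) sum_nonneg_eq_0_iff [OF fin(1), of "\<lambda>i. 1 - x i"]
      sum_nonneg_eq_0_iff [OF fin(2), of x] by auto
qed

lemma hypersimplex_Hge_pair_empty:
  fixes k r s :: nat
  assumes "finite E" "F \<subseteq> E" "G \<subseteq> E" "k + card (F \<inter> G) < r + s"
  shows "hypersimplex (int k) E \<inter> Hge F (real r) \<inter> Hge G (real s) = {}"
  using cube_slice_sum_pair_le(1) [OF assms(1-3)] assms(4)
  by (force simp: hypersimplex_eq_cube_slice [OF assms(1)] Hge_def)

lemma hypersimplex_Hge_pair_tight:
  fixes k r s :: nat
  assumes "finite E" "F \<subseteq> E" "G \<subseteq> E" "r + s = k + card (F \<inter> G)"
    and "x \<in> hypersimplex (int k) E \<inter> Hge F (real r) \<inter> Hge G (real s)"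
  shows "(\<Sum>i\<in>F. x i) = r" "(\<Sum>i\<in>G. x i) = s" "\<forall>i\<in>F \<inter> G. x i = 1" "\<forall>i\<in>E - (F \<union> G). x i = 0"
proof -
  have x: "x \<in> cube_slice k E" "r \<le> (\<Sum>i\<in>F. x i)" "s \<le> (\<Sum>i\<in>G. x i)"
    using assms(5) unfolding hypersimplex_eq_cube_slice [OF assms(1)] Hge_def by auto
  moreover have "real r + real s = real k + card (F \<inter> G)" using assms(4) by (metis of_nat_add)
  ultimately show "(\<Sum>i\<in>F. x i) = r" "(\<Sum>i\<in>G. x i) = s"
    using cube_slice_sum_pair_le(1) [OF assms(1-3) x(1)] by simp_all
  then have "(\<Sum>i\<in>F. x i) + (\<Sum>i\<in>G. x i) = of_int (int k) + card (F \<inter> G)"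
    using \<open>real r + real s = real k + card (F \<inter> G)\<close> by simp
  then show "\<forall>i\<in>F \<inter> G. x i = 1" "\<forall>i\<in>E - (F \<union> G). x i = 0"
    using cube_slice_sum_pair_le(2) [OF assms(1-3) x(1)] by blast+
qed

lemma hypersimplex_Hge_pair_eq_Heq:
  fixes k r s :: nat
  assumes "finite E" "F \<subseteq> E" "G \<subseteq> E" "r + s = k + card (F \<inter> G)"
  shows "hypersimplex (int k) E \<inter> Hge F (real r) \<inter> Hge G (real s) =
    hypersimplex (int k) E \<inter> Heq F (real r) \<inter> Heq G (real s)"
proof (intro set_eqI iffI)
  fix x assume x: "x \<in> hypersimplex (int k) E \<inter> Hge F (real r) \<inter> Hge G (real s)"
  then show "x \<in> hypersimplex (int k) E \<inter> Heq F (real r) \<inter> Heq G (real s)"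
    using hypersimplex_Hge_pair_tight(1,2) [OF assms x] unfolding Heq_def Hle_def by simp
qed (auto simp: Heq_def)

lemma hypersimplex_Hge_pair_subset_face:
  fixes k r s :: nat
  assumes "finite E" "F \<subseteq> E" "G \<subseteq> E" "r + s = k + card (F \<inter> G)"
    and Q: "x \<in> hypersimplex (int k) E \<inter> Hge F (real r) \<inter> Hge G (real s)"
  shows "(\<forall>i. i \<notin> (F - G) \<union> (G - F) \<longrightarrow> x i = indicator (F \<inter> G) i)"
    and "restr (F - G) x \<in> hypersimplex (int r - int (card (F \<inter> G))) (F - G)"
    and "restr (G - F) x \<in> hypersimplex (int s - int (card (F \<inter> G))) (G - F)"
proof -
  have fin: "finite (F - G)" "finite (G - F)" using assms(1-3) by (auto intro: finite_subset)
  note tight = hypersimplex_Hge_pair_tight [OF assms]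
  have x: "x \<in> cube_slice k E" using Q hypersimplex_eq_cube_slice [OF assms(1)] by blast
  then show "\<forall>i. i \<notin> (F - G) \<union> (G - F) \<longrightarrow> x i = indicator (F \<inter> G) i"
    using tight(3,4) unfolding cube_slice_def by (auto simp: indicator_def)
  have "(\<Sum>i\<in>F \<inter> G. x i) = card (F \<inter> G)" using tight(3) by simp
  then have "(\<Sum>i\<in>F - G. x i) = real r - card (F \<inter> G)" "(\<Sum>i\<in>G - F. x i) = real s - card (F \<inter> G)"
    using sum_Venn_split(1,2) [OF assms(1-3), of x] tight(1,2) by linarith+
  then show "restr (F - G) x \<in> hypersimplex (int r - int (card (F \<inter> G))) (F - G)"
    and "restr (G - F) x \<in> hypersimplex (int s - int (card (F \<inter> G))) (G - F)"
    using x assms(2,3) unfolding restr_in_hypersimplex_iff [OF fin(1)] restr_in_hypersimplex_iff [OF fin(2)]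
      cube_slice_def by auto
qed

lemma face_subset_hypersimplex_Hge_pair:
  fixes k r s :: nat
  assumes "finite E" "F \<subseteq> E" "G \<subseteq> E" "r + s = k + card (F \<inter> G)"
    and out: "\<And>i. i \<notin> (F - G) \<union> (G - F) \<Longrightarrow> x i = indicator (F \<inter> G) i"
    and "restr (F - G) x \<in> hypersimplex (int r - int (card (F \<inter> G))) (F - G)"
    and "restr (G - F) x \<in> hypersimplex (int s - int (card (F \<inter> G))) (G - F)"
  shows "x \<in> hypersimplex (int k) E \<inter> Hge F (real r) \<inter> Hge G (real s)"
proof -
  have fin: "finite (F - G)" "finite (G - F)" using assms(1-3) by (auto intro: finite_subset)
  have pieces: "\<forall>i\<in>F - G. 0 \<le> x i \<and> x i \<le> 1" "(\<Sum>i\<in>F - G. x i) = real r - card (F \<inter> G)"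
    "\<forall>i\<in>G - F. 0 \<le> x i \<and> x i \<le> 1" "(\<Sum>i\<in>G - F. x i) = real s - card (F \<inter> G)"
    using assms(6,7) unfolding restr_in_hypersimplex_iff [OF fin(1)] restr_in_hypersimplex_iff [OF fin(2)]
    by auto
  have "real r + real s = real k + card (F \<inter> G)" using assms(4) by (metis of_nat_add)
  moreover have "(\<Sum>i\<in>F \<inter> G. x i) = card (F \<inter> G)" using out by simp
  moreover have "(\<Sum>i\<in>E - (F \<union> G). x i) = 0" using out by (simp add: indicator_def)
  ultimately have "(\<Sum>i\<in>E. x i) = k" "(\<Sum>i\<in>F. x i) = r" "(\<Sum>i\<in>G. x i) = s"
    using sum_Venn_split [OF assms(1-3), of x] pieces(2,4) by linarith+
  moreover have "x i = 0" if "i \<notin> E" for i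
  proof -
    have "i \<notin> F" "i \<notin> G" using that assms(2,3) by auto
    then show ?thesis using out [of i] by simp
  qed
  moreover have "0 \<le> x i \<and> x i \<le> 1" if "i \<in> E" for i
    using pieces(1,3) out [of i] by (cases "i \<in> (F - G) \<union> (G - F)") (auto simp: indicator_def)
  ultimately show ?thesis
    unfolding hypersimplex_eq_cube_slice [OF assms(1)] cube_slice_def Hge_def by auto
qed

lemma hypersimplex_Hge_pair_eq_face:
  fixes k r s :: nat
  assumes "finite E" "F \<subseteq> E" "G \<subseteq> E" "r + s = k + card (F \<inter> G)"
  shows "hypersimplex (int k) E \<inter> Hge F (real r) \<inter> Hge G (real s) =
    {x. (\<forall>i. i \<notin> (F - G) \<union> (G - F) \<longrightarrow> x i = indicator (F \<inter> G) i) \<and>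
        restr (F - G) x \<in> hypersimplex (int r - int (card (F \<inter> G))) (F - G) \<and>
        restr (G - F) x \<in> hypersimplex (int s - int (card (F \<inter> G))) (G - F)}"
  using hypersimplex_Hge_pair_subset_face [OF assms] face_subset_hypersimplex_Hge_pair [OF assms]
  by blast

lemma simplex_product_Venn:
  assumes "finite E" "F \<subseteq> E" "G \<subseteq> E"
  shows "simplex_product [(int (card (F \<inter> G)), F \<inter> G), (m, F - G), (m', G - F), (0, E - (F \<union> G))] =
    {x. (\<forall>i. i \<notin> (F - G) \<union> (G - F) \<longrightarrow> x i = indicator (F \<inter> G) i) \<and>
        restr (F - G) x \<in> hypersimplex m (F - G) \<and> restr (G - F) x \<in> hypersimplex m' (G - F)}"
proof -
  have fin: "finite (F \<inter> G)" "finite (E - (F \<union> G))" using assms(1,2) by (auto intro: finite_subset)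
  have U: "F \<inter> G \<union> ((F - G) \<union> ((G - F) \<union> (E - (F \<union> G)))) = E" using assms(2,3) by auto
  have fixed: "((\<forall>i. i \<notin> E \<longrightarrow> x i = 0) \<and> (\<forall>i\<in>F \<inter> G. x i = 1) \<and> (\<forall>i\<in>E - (F \<union> G). x i = 0)) \<longleftrightarrow>
      (\<forall>i. i \<notin> (F - G) \<union> (G - F) \<longrightarrow> x i = indicator (F \<inter> G) i)" for x :: "'a \<Rightarrow> real"
    using assms(2,3) by (auto simp: indicator_def)
  have mem: "x \<in> simplex_product [(int (card (F \<inter> G)), F \<inter> G), (m, F - G), (m', G - F), (0, E - (F \<union> G))]
      \<longleftrightarrow> (\<forall>i. i \<notin> E \<longrightarrow> x i = 0) \<and> restr (F \<inter> G) x \<in> hypersimplex (int (card (F \<inter> G))) (F \<inter> G) \<and>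
        restr (F - G) x \<in> hypersimplex m (F - G) \<and> restr (G - F) x \<in> hypersimplex m' (G - F) \<and>
        restr (E - (F \<union> G)) x \<in> hypersimplex 0 (E - (F \<union> G))" for x
    unfolding simplex_product_def by (simp add: U)
  show ?thesis
  proof (intro set_eqI)
    fix x :: "'a \<Rightarrow> real"
    show "x \<in> simplex_product [(int (card (F \<inter> G)), F \<inter> G), (m, F - G), (m', G - F), (0, E - (F \<union> G))] \<longleftrightarrow>
      x \<in> {x. (\<forall>i. i \<notin> (F - G) \<union> (G - F) \<longrightarrow> x i = indicator (F \<inter> G) i) \<and>
        restr (F - G) x \<in> hypersimplex m (F - G) \<and> restr (G - F) x \<in> hypersimplex m' (G - F)}"
      unfolding mem mem_Collect_eq fixed [of x, symmetric]
        restr_in_hypersimplex_card_iff [OF fin(1)] restr_in_hypersimplex_zero_iff [OF fin(2)]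
      by blast
  qed
qed

lemma hypersimplex_Hge_pair_eq_simplex_product:
  fixes k r s :: nat
  assumes "finite E" "F \<subseteq> E" "G \<subseteq> E" "r + s = k + card (F \<inter> G)"
  shows "hypersimplex (int k) E \<inter> Hge F (real r) \<inter> Hge G (real s) =
    simplex_product [(int (card (F \<inter> G)), F \<inter> G), (int r - int (card (F \<inter> G)), F - G),
      (int s - int (card (F \<inter> G)), G - F), (0, E - (F \<union> G))]"
  unfolding hypersimplex_Hge_pair_eq_face [OF assms] simplex_product_Venn [OF assms(1-3)] ..

lemma hypersimplex_Hge_pair_relabel:
  fixes k r s :: nat
  assumes "finite E" "F \<subseteq> E" "G \<subseteq> E" "r + s = k + card (F \<inter> G)"
  obtains \<sigma> \<tau> where "bij_betw \<sigma> {1..card (F - G)} (F - G)" "bij_betw \<tau> {1..card (G - F)} (G - F)"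
    "bij_betw (\<lambda>x. (restr {1..card (F - G)} (x \<circ> \<sigma>), restr {1..card (G - F)} (x \<circ> \<tau>)))
      (hypersimplex (int k) E \<inter> Hge F (real r) \<inter> Hge G (real s))
      (hypersimplex (int r - int (card (F \<inter> G))) {1..card (F - G)} \<times>
       hypersimplex (int s - int (card (F \<inter> G))) {1..card (G - F)})"
proof -
  have fin: "finite (F - G)" "finite (G - F)" using assms(1-3) by (auto intro: finite_subset)
  obtain \<sigma> where \<sigma>: "bij_betw \<sigma> {1..card (F - G)} (F - G)" using ex_bij_betw_nat_finite_1 [OF fin(1)] by blast
  obtain \<tau> where \<tau>: "bij_betw \<tau> {1..card (G - F)} (G - F)" using ex_bij_betw_nat_finite_1 [OF fin(2)] by blast
  show ?thesis
    using that [OF \<sigma> \<tau>] hypersimplex_pair_relabel [OF \<sigma> \<tau> fin, of "indicator (F \<inter> G)"]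
    unfolding hypersimplex_Hge_pair_eq_face [OF assms] by blast
qed

section \<open>Matroids given by their bases\<close>

lemma obtain_subset_between:
  assumes "finite T" "Z \<subseteq> T" "card Z \<le> m" "m \<le> card T"
  obtains Y where "Z \<subseteq> Y" "Y \<subseteq> T" "card Y = m"
proof -
  have "finite Z" using assms(1,2) finite_subset by blast
  have "m - card Z \<le> card (T - Z)" using assms \<open>finite Z\<close> by (simp add: card_Diff_subset)
  then obtain W where W: "W \<subseteq> T - Z" "card W = m - card Z" "finite W"
    by (rule obtain_subset_with_card_n)
  have "card (Z \<union> W) = card Z + card W" using W \<open>finite Z\<close> by (subst card_Un_disjoint) auto
  then show ?thesis using that [of "Z \<union> W"] W assms(2,3) by auto
qed

locale basis_matroid =
  fixes E :: "'a set" and \<B> :: "'a set set"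
  assumes matroid: "matroid E \<B>"
begin

lemma finite_ground: "finite E"
  using matroid unfolding matroid_def by blast

lemma bases_nonempty: "\<B> \<noteq> {}"
  using matroid unfolding matroid_def by auto

lemma basis_subset_ground: "X \<in> \<B> \<Longrightarrow> X \<subseteq> E"
  using matroid unfolding matroid_def by auto

lemma basis_exchange: "X \<in> \<B> \<Longrightarrow> Y \<in> \<B> \<Longrightarrow> x \<in> X - Y \<Longrightarrow> \<exists>y\<in>Y - X. insert y (X - {x}) \<in> \<B>"
  using matroid unfolding matroid_def by blast

lemma finite_basis: "X \<in> \<B> \<Longrightarrow> finite X"
  using basis_subset_ground finite_ground finite_subset by blast

lemma finite_bases: "finite \<B>"
  using basis_subset_ground finite_ground by (meson Pow_iff finite_Pow_iff finite_subset subsetI)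

lemma card_bases_eq:
  assumes "X \<in> \<B>" "Y \<in> \<B>"
  shows "card X = card Y"
  using assms(1)
proof (induction "card (X - Y)" arbitrary: X)
  case 0
  then have "X \<subseteq> Y" using finite_basis by simp
  moreover have "Y \<subseteq> X" using basis_exchange [OF assms(2) "0.prems"] \<open>X \<subseteq> Y\<close> by blast
  ultimately show ?case by simp
next
  case (Suc n)
  then have "X - Y \<noteq> {}" by (intro notI) simp
  then obtain x where x: "x \<in> X - Y" by blast
  then obtain y where y: "y \<in> Y - X" and X': "insert y (X - {x}) \<in> \<B>"
    using basis_exchange [OF Suc.prems assms(2)] by blast
  have "insert y (X - {x}) - Y = (X - Y) - {x}" using y by auto
  then have "card (insert y (X - {x}) - Y) = n"
    using Suc.hyps(2) x finite_basis [OF Suc.prems] by simp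
  then have "card (insert y (X - {x})) = card Y" using Suc.hyps(1) X' by blast
  moreover have "card X > 0" using x finite_basis [OF Suc.prems] card_gt_0_iff by blast
  then have "card (insert y (X - {x})) = card X"
    using x y finite_basis [OF Suc.prems] by (simp add: card_Diff_singleton_if)
  ultimately show ?case by simp
qed

lemma rk_attained: "\<exists>X\<in>\<B>. rk \<B> A = card (A \<inter> X)"
proof -
  have "rk \<B> A \<in> (\<lambda>X. card (A \<inter> X)) ` \<B>"
    unfolding rk_def using finite_bases bases_nonempty by (intro Max_in) auto
  then show ?thesis by auto
qed

lemma card_Int_basis_le_rk: "X \<in> \<B> \<Longrightarrow> card (A \<inter> X) \<le> rk \<B> A"
  unfolding rk_def using finite_bases by (intro Max_ge) auto

lemma rk_ground:
  assumes "X \<in> \<B>"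
  shows "rk \<B> E = card X"
proof -
  obtain Y where Y: "Y \<in> \<B>" "rk \<B> E = card (E \<inter> Y)" using rk_attained by blast
  then have "E \<inter> Y = Y" using basis_subset_ground by blast
  then show ?thesis using Y card_bases_eq [OF assms Y(1)] by simp
qed

lemma rk_le_rk_ground: "rk \<B> A \<le> rk \<B> E"
proof -
  obtain Y where Y: "Y \<in> \<B>" "rk \<B> A = card (A \<inter> Y)" using rk_attained by blast
  then show ?thesis using rk_ground [OF Y(1)] finite_basis [OF Y(1)] by (simp add: card_mono)
qed

lemma rk_le_card:
  assumes "finite A"
  shows "rk \<B> A \<le> card A"
proof -
  obtain Y where "rk \<B> A = card (A \<inter> Y)" using rk_attained by blast
  then show ?thesis using assms by (simp add: card_mono)
qed

lemma rk_mono: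
  assumes "A \<subseteq> A'"
  shows "rk \<B> A \<le> rk \<B> A'"
proof -
  obtain Y where Y: "Y \<in> \<B>" "rk \<B> A = card (A \<inter> Y)" using rk_attained by blast
  have "card (A \<inter> Y) \<le> card (A' \<inter> Y)" using assms finite_basis [OF Y(1)] by (intro card_mono) auto
  then show ?thesis using Y card_Int_basis_le_rk [OF Y(1), of A'] by simp
qed

lemma indep_empty: "indep \<B> {}"
  using bases_nonempty unfolding indep_def by blast

lemma indep_subset: "indep \<B> I \<Longrightarrow> J \<subseteq> I \<Longrightarrow> indep \<B> J"
  unfolding indep_def by blast

lemma finite_indep: "indep \<B> I \<Longrightarrow> finite I"
  unfolding indep_def using finite_basis finite_subset by blast

lemma card_indep_le_rk:
  assumes "indep \<B> I" "I \<subseteq> A"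
  shows "card I \<le> rk \<B> A"
proof -
  obtain X where X: "X \<in> \<B>" "I \<subseteq> X" using assms(1) unfolding indep_def by blast
  then have "card I \<le> card (A \<inter> X)" using assms(2) finite_basis by (intro card_mono) auto
  then show ?thesis using card_Int_basis_le_rk [OF X(1), of A] by linarith
qed

lemma rk_indep: "indep \<B> I \<Longrightarrow> rk \<B> I = card I"
  using card_indep_le_rk [of I I] rk_le_card [of I] finite_indep by fastforce

lemma rk_less_card_if_dependent:
  assumes "finite I" "\<not> indep \<B> I"
  shows "rk \<B> I < card I"
proof -
  obtain X where X: "X \<in> \<B>" "rk \<B> I = card (I \<inter> X)" using rk_attained by blast
  then have "I \<inter> X \<subset> I" using assms(2) unfolding indep_def by blast
  then show ?thesis using X(2) assms(1) by (simp add: psubset_card_mono)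
qed

lemma ex_indep_card_rk: "\<exists>I. indep \<B> I \<and> I \<subseteq> A \<and> card I = rk \<B> A"
proof -
  obtain X where "X \<in> \<B>" "rk \<B> A = card (A \<inter> X)" using rk_attained by blast
  then show ?thesis unfolding indep_def by (intro exI [of _ "A \<inter> X"]) auto
qed

lemma ex_basis_superset_max_Int:
  assumes "indep \<B> I" "finite Y"
  obtains X where "X \<in> \<B>" "I \<subseteq> X" "\<And>X'. X' \<in> \<B> \<Longrightarrow> I \<subseteq> X' \<Longrightarrow> card (X' \<inter> Y) \<le> card (X \<inter> Y)"
proof -
  obtain X0 where "X0 \<in> \<B> \<and> I \<subseteq> X0" using assms(1) unfolding indep_def by blast
  moreover have "\<forall>X'. X' \<in> \<B> \<and> I \<subseteq> X' \<longrightarrow> card (X' \<inter> Y) < Suc (card Y)"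
    using assms(2) by (auto simp: less_Suc_eq_le intro: card_mono)
  ultimately have "\<exists>X. (X \<in> \<B> \<and> I \<subseteq> X) \<and> (\<forall>X'. X' \<in> \<B> \<and> I \<subseteq> X' \<longrightarrow> card (X' \<inter> Y) \<le> card (X \<inter> Y))"
    by (rule ex_has_greatest_nat)
  then show ?thesis using that by blast
qed

text \<open>A basis \<open>X \<supseteq> I\<close> meeting a basis \<open>X\<^sub>J \<supseteq> J\<close> maximally has \<open>X - I \<subseteq> X\<^sub>J - J\<close>
  (by exchange and by the failure of augmentation); counting then forces \<open>card J \<le> card I\<close>.\<close>
lemma indep_augment:
  assumes I: "indep \<B> I" and J: "indep \<B> J" and less: "card I < card J"
  shows "\<exists>e\<in>J - I. indep \<B> (insert e I)"
proof (rule ccontr)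
  assume no_aug: "\<not> (\<exists>e\<in>J - I. indep \<B> (insert e I))"
  obtain XJ where XJ: "XJ \<in> \<B>" "J \<subseteq> XJ" using J unfolding indep_def by blast
  obtain X where X: "X \<in> \<B>" "I \<subseteq> X"
    and max: "\<And>X'. X' \<in> \<B> \<Longrightarrow> I \<subseteq> X' \<Longrightarrow> card (X' \<inter> XJ) \<le> card (X \<inter> XJ)"
    using ex_basis_superset_max_Int [OF I finite_basis [OF XJ(1)]] by blast
  have "X - I \<subseteq> XJ - J"
  proof
    fix x assume x: "x \<in> X - I"
    have "x \<in> XJ"
    proof (rule ccontr)
      assume "x \<notin> XJ"
      then obtain y where y: "y \<in> XJ - X" and X': "insert y (X - {x}) \<in> \<B>"
        using basis_exchange [OF X(1) XJ(1)] x by blast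
      have "insert y (X - {x}) \<inter> XJ = insert y (X \<inter> XJ)" using y \<open>x \<notin> XJ\<close> by auto
      then have "card (insert y (X - {x}) \<inter> XJ) = Suc (card (X \<inter> XJ))"
        using y finite_basis [OF X(1)] by simp
      moreover have "I \<subseteq> insert y (X - {x})" using X(2) x by auto
      ultimately show False using max [OF X'] by simp
    qed
    moreover have "x \<notin> J"
      using no_aug x X unfolding indep_def by (metis DiffE DiffI insert_subset)
    ultimately show "x \<in> XJ - J" by blast
  qed
  then have "card X - card I \<le> card XJ - card J"
    using X(2) XJ finite_basis I J finite_indep by (metis card_Diff_subset card_mono finite_Diff)
  moreover have "card X = card XJ" using card_bases_eq X(1) XJ(1) by blast
  moreover have "card J \<le> card XJ" using XJ finite_basis by (simp add: card_mono)
  ultimately show False using less by linarith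
qed

lemma indep_extend:
  assumes "indep \<B> I" "I \<subseteq> A"
  shows "\<exists>J. indep \<B> J \<and> I \<subseteq> J \<and> J \<subseteq> A \<and> card J = rk \<B> A"
  using assms
proof (induction "rk \<B> A - card I" arbitrary: I)
  case 0
  then show ?case using card_indep_le_rk by (metis diff_is_0_eq le_antisym order_refl)
next
  case (Suc d)
  obtain K where K: "indep \<B> K" "K \<subseteq> A" "card K = rk \<B> A" using ex_indep_card_rk by blast
  have "card I < card K" using Suc.hyps(2) K(3) by simp
  then obtain e where e: "e \<in> K - I" "indep \<B> (insert e I)" using indep_augment [OF Suc.prems(1) K(1)] by blast
  have "card (insert e I) = Suc (card I)" using e finite_indep [OF Suc.prems(1)] by simp
  then have "d = rk \<B> A - card (insert e I)" using Suc.hyps(2) by simp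
  then obtain J where "indep \<B> J" "insert e I \<subseteq> J" "J \<subseteq> A" "card J = rk \<B> A"
    using Suc.hyps(1) e K(2) Suc.prems(2) by blast
  then show ?case by blast
qed

lemma rk_submodular: "rk \<B> (A \<union> C) + rk \<B> (A \<inter> C) \<le> rk \<B> A + rk \<B> C"
proof -
  obtain I where I: "indep \<B> I" "I \<subseteq> A \<inter> C" "card I = rk \<B> (A \<inter> C)" using ex_indep_card_rk by blast
  obtain J where J: "indep \<B> J" "I \<subseteq> J" "J \<subseteq> A \<union> C" "card J = rk \<B> (A \<union> C)"
    using indep_extend [OF I(1)] I(2) by blast
  have "finite J" using finite_indep J(1) by blast
  have "card (J \<inter> A) \<le> rk \<B> A" "card (J \<inter> C) \<le> rk \<B> C"
    using indep_subset [OF J(1)] by (auto intro: card_indep_le_rk)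
  moreover have "card (J \<inter> A) + card (J \<inter> C) = card (J \<inter> A \<union> J \<inter> C) + card (J \<inter> A \<inter> (J \<inter> C))"
    using \<open>finite J\<close> by (intro card_Un_Int) auto
  moreover have "card (J \<inter> A \<union> J \<inter> C) = card J" using J(3) by (metis Int_Un_distrib le_iff_inf)
  moreover have "card I \<le> card (J \<inter> A \<inter> (J \<inter> C))" using I(2) J(2) \<open>finite J\<close> by (intro card_mono) auto
  ultimately show ?thesis using I(3) J(4) by linarith
qed

lemma rk_insert_le_if_dependent:
  assumes "indep \<B> I" "I \<subseteq> S" "\<not> indep \<B> (insert e I)"
  shows "rk \<B> (insert e S) \<le> rk \<B> S"
proof -
  have "finite I" using assms(1) finite_indep by blast
  then have "rk \<B> (insert e I) < card (insert e I)" using rk_less_card_if_dependent assms(3) by simp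
  then have "rk \<B> (insert e I) \<le> card I" using \<open>finite I\<close> by (simp add: card_insert_if split: if_splits)
  moreover have "card I \<le> rk \<B> (S \<inter> insert e I)" using assms(1,2) by (intro card_indep_le_rk) auto
  moreover have "S \<union> insert e I = insert e S" using assms(2) by auto
  then have "rk \<B> (insert e S) + rk \<B> (S \<inter> insert e I) \<le> rk \<B> S + rk \<B> (insert e I)"
    using rk_submodular [of S "insert e I"] by simp
  ultimately show ?thesis by linarith
qed

lemma flat_absorbs_dependent_element:
  assumes "flat E \<B> F" "indep \<B> I" "I \<subseteq> F" "\<not> indep \<B> (insert e I)" "e \<in> E"
  shows "e \<in> F"
proof (rule ccontr)
  assume "e \<notin> F"
  then have "rk \<B> F < rk \<B> (insert e F)" using assms(1,5) unfolding flat_def by blast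
  then show False using rk_insert_le_if_dependent [OF assms(2,3,4)] by simp
qed

lemma circuit_subset_ground: "circuit E \<B> C \<Longrightarrow> C \<subseteq> E"
  unfolding circuit_def by blast

lemma circuit_dependent: "circuit E \<B> C \<Longrightarrow> \<not> indep \<B> C"
  unfolding circuit_def by blast

lemma circuit_minimal: "circuit E \<B> C \<Longrightarrow> D \<subset> C \<Longrightarrow> indep \<B> D"
  unfolding circuit_def by blast

lemma finite_circuit: "circuit E \<B> C \<Longrightarrow> finite C"
  using circuit_subset_ground finite_ground finite_subset by blast

lemma card_circuit:
  assumes "circuit E \<B> C"
  shows "card C = rk \<B> C + 1"
proof -
  have "C \<noteq> {}" using circuit_dependent [OF assms] indep_empty by blast
  then obtain c where "c \<in> C" by blast
  then have "card (C - {c}) \<le> rk \<B> C"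
    using circuit_minimal [OF assms] by (intro card_indep_le_rk) auto
  moreover have "rk \<B> C < card C"
    using rk_less_card_if_dependent finite_circuit circuit_dependent assms by blast
  ultimately show ?thesis using \<open>c \<in> C\<close> finite_circuit [OF assms] by (simp add: card_Diff_singleton)
qed

lemma rk_Un_circuit_less:
  assumes "circuit E \<B> C" "\<not> C \<subseteq> A"
  shows "rk \<B> (A \<union> C) < rk \<B> A + card (C - A)"
proof -
  have "indep \<B> (A \<inter> C)" using circuit_minimal [OF assms(1)] assms(2) by blast
  then have "card (A \<inter> C) \<le> rk \<B> (A \<inter> C)" by (intro card_indep_le_rk) auto
  moreover have "card (C - A) + card (A \<inter> C) = card C"
    using card_Int_Diff [OF finite_circuit [OF assms(1)], of A] by (simp add: Int_commute)
  moreover have "rk \<B> (A \<union> C) + rk \<B> (A \<inter> C) \<le> rk \<B> A + rk \<B> C" by (rule rk_submodular)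
  ultimately show ?thesis using card_circuit [OF assms(1)] by linarith
qed

lemma circuit_unique_in_insert_indep:
  assumes C: "circuit E \<B> C" and D: "circuit E \<B> D" and S: "indep \<B> S"
    and "C \<subseteq> insert c S" "D \<subseteq> insert c S"
  shows "C = D"
proof (rule ccontr)
  assume "C \<noteq> D"
  moreover have "\<not> C \<subset> D" using circuit_minimal [OF D] circuit_dependent [OF C] by blast
  ultimately have "C \<inter> D \<subset> C" by blast
  then have "card (C \<inter> D) \<le> rk \<B> (C \<inter> D)"
    using card_indep_le_rk circuit_minimal [OF C] by blast
  have "(C \<union> D) - {c} \<subseteq> S" using assms(4,5) by blast
  then have "indep \<B> ((C \<union> D) - {c})" by (rule indep_subset [OF S])
  then have "card ((C \<union> D) - {c}) \<le> rk \<B> (C \<union> D)" by (intro card_indep_le_rk) auto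
  moreover have "card (C \<union> D) - 1 \<le> card ((C \<union> D) - {c})"
    using diff_card_le_card_Diff [of "{c}" "C \<union> D"] by simp
  moreover have "card C + card D = card (C \<union> D) + card (C \<inter> D)"
    using card_Un_Int finite_circuit C D by blast
  moreover have "rk \<B> (C \<union> D) + rk \<B> (C \<inter> D) \<le> rk \<B> C + rk \<B> D" by (rule rk_submodular)
  ultimately show False
    using \<open>card (C \<inter> D) \<le> rk \<B> (C \<inter> D)\<close> card_circuit [OF C] card_circuit [OF D] by linarith
qed

lemma stressed_indep_if_card_le:
  assumes A: "stressed E \<B> A" and "Y \<subseteq> A" "card Y \<le> rk \<B> A"
  shows "indep \<B> Y"
proof -
  obtain m where m: "restr_bases \<B> A = {X. X \<subseteq> A \<and> card X = m}"
    using A unfolding stressed_def uniform_on_def by blast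
  obtain I where "indep \<B> I" "I \<subseteq> A" "card I = rk \<B> A" using ex_indep_card_rk by blast
  then have "I \<in> restr_bases \<B> A" unfolding restr_bases_def by blast
  then have "m = rk \<B> A" using m \<open>card I = rk \<B> A\<close> by simp
  have "finite A" using A finite_ground finite_subset unfolding stressed_def by blast
  then obtain Y' where "Y \<subseteq> Y'" "Y' \<subseteq> A" "card Y' = rk \<B> A"
    using obtain_subset_between [OF _ assms(2,3) rk_le_card] by blast
  then have "Y' \<in> restr_bases \<B> A" using m \<open>m = rk \<B> A\<close> by blast
  then show ?thesis using \<open>Y \<subseteq> Y'\<close> indep_subset unfolding restr_bases_def by blast
qed

lemma stressed_rk_Un:
  assumes A: "stressed E \<B> A" and Z: "Z \<subseteq> E - A" "card Z \<le> rk \<B> E - rk \<B> A"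
  shows "rk \<B> A + card Z \<le> rk \<B> (A \<union> Z)"
proof -
  obtain m where m: "contr_bases E \<B> A = {X. X \<subseteq> E - A \<and> card X = m}"
    using A unfolding stressed_def uniform_on_def by blast
  obtain X where X: "X \<in> \<B>" "rk \<B> A = card (A \<inter> X)" using rk_attained by blast
  have "A \<inter> X \<in> restr_bases \<B> A" unfolding restr_bases_def indep_def using X by auto
  moreover have "(X - A) \<union> (A \<inter> X) = X" by auto
  ultimately have "\<exists>I\<in>restr_bases \<B> A. (X - A) \<union> I \<in> \<B>" using X(1) by metis
  then have "X - A \<in> contr_bases E \<B> A"
    unfolding contr_bases_def using basis_subset_ground [OF X(1)] by auto
  then have "card (X - A) = m" using m by blast
  moreover have "card X = card (X \<inter> A) + card (X - A)" using card_Int_Diff finite_basis X(1) by blast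
  ultimately have m_eq: "m = rk \<B> E - rk \<B> A" using X rk_ground by (simp add: Int_commute)
  have "card (X - A) \<le> card (E - A)"
    using basis_subset_ground [OF X(1)] finite_ground by (intro card_mono) auto
  then obtain Z' where Z': "Z \<subseteq> Z'" "Z' \<subseteq> E - A" "card Z' = m"
    using obtain_subset_between [of "E - A" Z m] finite_ground Z \<open>card (X - A) = m\<close> m_eq by auto
  then have "Z' \<in> contr_bases E \<B> A" using m by blast
  then obtain I where I: "I \<in> restr_bases \<B> A" "Z' \<union> I \<in> \<B>" unfolding contr_bases_def by blast
  then have "I \<subseteq> A" "card I = rk \<B> A" "finite I"
    using finite_indep unfolding restr_bases_def by auto
  have "finite Z" using Z(1) finite_ground finite_subset by blast
  have "Z \<inter> I = {}" using Z(1) \<open>I \<subseteq> A\<close> by blast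
  then have "card Z + card I = card (Z \<union> I)"
    using \<open>finite Z\<close> \<open>finite I\<close> by (simp add: card_Un_disjoint)
  also have "\<dots> \<le> card ((A \<union> Z) \<inter> (Z' \<union> I))"
    using Z'(1) \<open>I \<subseteq> A\<close> finite_basis [OF I(2)] by (intro card_mono) auto
  also have "\<dots> \<le> rk \<B> (A \<union> Z)" using card_Int_basis_le_rk [OF I(2)] .
  finally show ?thesis using \<open>card I = rk \<B> A\<close> by linarith
qed

text \<open>A circuit leaving a stressed set adds at least as many independent elements as
  the contraction allows, hence reaches full rank.\<close>
lemma rk_Un_circuit_stressed:
  assumes A: "stressed E \<B> A" and C: "circuit E \<B> C" "\<not> C \<subseteq> A"
  shows "rk \<B> (A \<union> C) = rk \<B> E"
proof -
  have CA: "C - A \<subseteq> E - A" using circuit_subset_ground [OF C(1)] by blast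
  have "\<not> card (C - A) \<le> rk \<B> E - rk \<B> A"
  proof
    assume "card (C - A) \<le> rk \<B> E - rk \<B> A"
    then have "rk \<B> A + card (C - A) \<le> rk \<B> (A \<union> (C - A))" using stressed_rk_Un [OF A CA] by blast
    then show False using rk_Un_circuit_less [OF C] by simp
  qed
  then obtain Z where Z: "Z \<subseteq> C - A" "card Z = rk \<B> E - rk \<B> A"
    using obtain_subset_with_card_n [of "rk \<B> E - rk \<B> A" "C - A"] by auto
  moreover have "Z \<subseteq> E - A" using Z(1) CA by blast
  ultimately have "rk \<B> A + card Z \<le> rk \<B> (A \<union> Z)" using stressed_rk_Un [OF A \<open>Z \<subseteq> E - A\<close>] by simp
  moreover have "rk \<B> (A \<union> Z) \<le> rk \<B> (A \<union> C)" using Z(1) by (intro rk_mono) auto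
  ultimately show ?thesis using Z(2) rk_le_rk_ground [of A] rk_le_rk_ground [of "A \<union> C"] by linarith
qed

lemma circuit_in_rank_sized_set:
  assumes C: "circuit E \<B> C" and "card C \<le> rk \<B> E"
  obtains c I where "indep \<B> I" "C \<subseteq> insert c I" "insert c I \<subseteq> E" "card (insert c I) = rk \<B> E"
proof -
  have "finite C" and "C \<noteq> {}" using finite_circuit [OF C] circuit_dependent [OF C] indep_empty by auto
  then obtain c where c: "c \<in> C" by blast
  then obtain X where X: "X \<in> \<B>" "C - {c} \<subseteq> X"
    using circuit_minimal [OF C] unfolding indep_def by blast
  have "c \<notin> X" using X c circuit_dependent [OF C] unfolding indep_def by blast
  have "card C > 0" using \<open>finite C\<close> \<open>C \<noteq> {}\<close> by (simp add: card_gt_0_iff)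
  then have "card (C - {c}) < card X"
    using c \<open>finite C\<close> assms(2) rk_ground [OF X(1)] by (simp add: card_Diff_singleton)
  then have "\<not> X \<subseteq> C - {c}" using card_mono [of "C - {c}" X] \<open>finite C\<close> by auto
  then obtain b where b: "b \<in> X" "b \<notin> C - {c}" by blast
  have "indep \<B> (X - {b})" unfolding indep_def using X(1) by blast
  moreover have "C \<subseteq> insert c (X - {b})" using X(2) b by auto
  moreover have "insert c (X - {b}) \<subseteq> E"
    using basis_subset_ground [OF X(1)] circuit_subset_ground [OF C] c by auto
  moreover have "card X > 0" using b(1) finite_basis [OF X(1)] card_gt_0_iff by blast
  then have "card (insert c (X - {b})) = rk \<B> E"
    using \<open>c \<notin> X\<close> b(1) finite_basis [OF X(1)] rk_ground [OF X(1)] by (simp add: card_Diff_singleton)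
  ultimately show ?thesis using that by blast
qed

lemma dependent_if_rk_less_card:
  assumes "I \<subseteq> A" "rk \<B> A < card I"
  shows "\<not> indep \<B> I"
  using card_indep_le_rk [OF _ assms(1)] assms(2) by linarith

lemma circuit_if_stressed_card:
  assumes A: "stressed E \<B> A" and D: "D \<subseteq> A" "card D = rk \<B> A + 1"
  shows "circuit E \<B> D"
  unfolding circuit_def
proof (intro conjI allI impI)
  show "D \<subseteq> E" using D(1) A unfolding stressed_def by blast
  show "\<not> indep \<B> D" using dependent_if_rk_less_card D by simp
  have "finite D" using D(2) card.infinite by force
  fix D' assume "D' \<subset> D"
  then have "card D' < card D" by (rule psubset_card_mono [OF \<open>finite D\<close>])
  then have "card D' \<le> rk \<B> A" using D(2) by simp
  then show "indep \<B> D'" using stressed_indep_if_card_le [OF A] \<open>D' \<subset> D\<close> D(1) by blast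
qed

lemma cyclic_flat_covered_by_circuits:
  assumes "cyclic_flat E \<B> F" "x \<in> F"
  obtains C where "circuit E \<B> C" "C \<subseteq> F" "x \<in> C"
  using assms unfolding cyclic_flat_def by blast

lemma rk_less_card_cyclic_flat:
  assumes "proper_cyclic_flat E \<B> F"
  shows "rk \<B> F < card F"
proof -
  have cyc: "cyclic_flat E \<B> F" "F \<noteq> {}" using assms unfolding proper_cyclic_flat_def by blast+
  then obtain x where "x \<in> F" by blast
  then obtain C where C: "circuit E \<B> C" "C \<subseteq> F"
    using cyclic_flat_covered_by_circuits [OF cyc(1)] by blast
  have "finite F" using cyc(1) finite_ground finite_subset unfolding cyclic_flat_def flat_def by blast
  moreover have "\<not> indep \<B> F" using C indep_subset circuit_dependent by blast
  ultimately show ?thesis by (rule rk_less_card_if_dependent)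
qed

lemma rk_less_rk_ground_proper_flat:
  assumes "flat E \<B> F" "F \<noteq> E"
  shows "rk \<B> F < rk \<B> E"
proof -
  obtain e where "e \<in> E - F" using assms unfolding flat_def by blast
  then have "rk \<B> F < rk \<B> (insert e F)" using assms(1) unfolding flat_def by blast
  then show ?thesis using rk_le_rk_ground [of "insert e F"] by linarith
qed

lemma stressed_subset_flat:
  assumes F: "stressed E \<B> F" and G: "flat E \<B> G" and "rk \<B> F \<le> card (F \<inter> G)"
  shows "F \<subseteq> G"
proof
  fix e assume "e \<in> F"
  obtain I where I: "I \<subseteq> F \<inter> G" "card I = rk \<B> F" "finite I"
    using obtain_subset_with_card_n [OF assms(3)] by blast
  then have "indep \<B> I" using stressed_indep_if_card_le [OF F] by auto
  show "e \<in> G"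
  proof (rule ccontr)
    assume "e \<notin> G"
    then have "e \<notin> I" using I(1) by blast
    then have "card (insert e I) = rk \<B> F + 1" using I(2,3) by simp
    moreover have "insert e I \<subseteq> F" using \<open>e \<in> F\<close> I(1) by blast
    ultimately have "\<not> indep \<B> (insert e I)" using dependent_if_rk_less_card by simp
    moreover have "e \<in> E" using F \<open>e \<in> F\<close> unfolding stressed_def by blast
    ultimately show False
      using flat_absorbs_dependent_element [OF G \<open>indep \<B> I\<close>] I(1) \<open>e \<notin> G\<close> by blast
  qed
qed

lemma not_psubset_stressed:
  assumes F: "flat E \<B> F" "rk \<B> F < card F" and G: "stressed E \<B> G"
  shows "\<not> F \<subset> G"
proof
  assume "F \<subset> G"
  then obtain g where g: "g \<in> G" "g \<notin> F" by blast
  show False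
  proof (cases "rk \<B> G \<le> rk \<B> F")
    case True
    have "g \<in> E" using G g(1) unfolding stressed_def by blast
    then have "rk \<B> F < rk \<B> (insert g F)" using F(1) g(2) unfolding flat_def by blast
    moreover have "rk \<B> (insert g F) \<le> rk \<B> G" using \<open>F \<subset> G\<close> g(1) by (intro rk_mono) auto
    ultimately show False using True by simp
  next
    case False
    obtain D where D: "D \<subseteq> F" "card D = rk \<B> F + 1"
      using obtain_subset_with_card_n [of "rk \<B> F + 1" F] F(2) by auto
    then have "\<not> indep \<B> D" using dependent_if_rk_less_card by simp
    moreover have "indep \<B> D"
      using stressed_indep_if_card_le [OF G] D \<open>F \<subset> G\<close> False by auto
    ultimately show False by blast
  qed
qed

end

section \<open>Cyclic flats of split matroids\<close>

locale split_basis_matroid =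
  fixes E :: "'a set" and \<B> :: "'a set set"
  assumes split: "split_matroid E \<B>"
begin

sublocale basis_matroid E \<B>
  using split unfolding split_matroid_def connected_matroid_def by unfold_locales blast

lemma mem_relax_all:
  assumes "X \<subseteq> E" "card X = rk \<B> E"
  shows "X \<in> relax_all E \<B>"
proof -
  obtain m where m: "relax_all E \<B> = {X. X \<subseteq> E \<and> card X = m}"
    using split unfolding split_matroid_def uniform_on_def by blast
  obtain X0 where "X0 \<in> \<B>" using bases_nonempty by blast
  then have "X0 \<in> relax_all E \<B>" unfolding relax_all_def by blast
  then have "m = rk \<B> E" using m rk_ground [OF \<open>X0 \<in> \<B>\<close>] by simp
  then show ?thesis using m assms by simp
qed

text \<open>A rank-sized non-basis containing C becomes a basis under relaxation, so it lies in the
  cover of a stressed A and contains a circuit \<open>D \<subseteq> A\<close>; both circuits sit in an independent set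
  plus one element, hence \<open>C = D\<close>.\<close>
lemma circuit_in_stressed:
  assumes C: "circuit E \<B> C" and "card C \<le> rk \<B> E"
  obtains A where "stressed E \<B> A" "C \<subseteq> A" "card C = rk \<B> A + 1"
proof -
  obtain c I where I: "indep \<B> I" "C \<subseteq> insert c I" "insert c I \<subseteq> E" "card (insert c I) = rk \<B> E"
    using circuit_in_rank_sized_set [OF assms] .
  have "insert c I \<in> relax_all E \<B>" using I(3,4) by (rule mem_relax_all)
  moreover have "insert c I \<notin> \<B>" using I(2) circuit_dependent [OF C] unfolding indep_def by blast
  ultimately have "insert c I \<in> \<Union>{cover E \<B> A | A. stressed E \<B> A \<and> cover E \<B> A \<noteq> {}}"
    unfolding relax_all_def by simp
  then obtain A where A: "stressed E \<B> A" "insert c I \<in> cover E \<B> A" by blast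
  then have "rk \<B> A + 1 \<le> card (insert c I \<inter> A)" unfolding cover_def by simp
  then obtain D where D: "D \<subseteq> insert c I \<inter> A" "card D = rk \<B> A + 1"
    by (rule obtain_subset_with_card_n)
  then have "circuit E \<B> D" using circuit_if_stressed_card [OF A(1)] by blast
  then have "C = D" using circuit_unique_in_insert_indep [OF C _ I(1,2)] D(1) by blast
  then show ?thesis using that A(1) D by blast
qed

text \<open>The stressed set A around a circuit of F is F itself: A meets the flat F in more than
  \<open>rk A\<close> elements, so \<open>A \<subseteq> F\<close>; and a circuit of F leaving A would give F full rank.\<close>
lemma proper_cyclic_flat_stressed:
  assumes F: "proper_cyclic_flat E \<B> F"
  shows "stressed E \<B> F"
proof -
  have flat: "flat E \<B> F" and cyc: "cyclic_flat E \<B> F"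
    using F unfolding proper_cyclic_flat_def cyclic_flat_def by blast+
  have rk_less: "rk \<B> F < rk \<B> E"
    using rk_less_rk_ground_proper_flat flat F unfolding proper_cyclic_flat_def by blast
  obtain x where "x \<in> F" using F unfolding proper_cyclic_flat_def by blast
  then obtain C where C: "circuit E \<B> C" "C \<subseteq> F" using cyclic_flat_covered_by_circuits [OF cyc] by blast
  have "card C \<le> rk \<B> E" using card_circuit [OF C(1)] rk_mono [OF C(2)] rk_less by linarith
  then obtain A where A: "stressed E \<B> A" "C \<subseteq> A" "card C = rk \<B> A + 1"
    using circuit_in_stressed [OF C(1)] by blast
  have "card C \<le> card (A \<inter> F)"
    using A(2) C(2) flat finite_ground unfolding flat_def by (intro card_mono) (auto intro: finite_subset)
  then have "A \<subseteq> F" using stressed_subset_flat [OF A(1) flat] A(3) by simp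
  moreover have "F \<subseteq> A"
  proof
    fix y assume "y \<in> F"
    then obtain C' where C': "circuit E \<B> C'" "C' \<subseteq> F" "y \<in> C'"
      using cyclic_flat_covered_by_circuits [OF cyc] by blast
    show "y \<in> A"
    proof (rule ccontr)
      assume "y \<notin> A"
      then have "rk \<B> (A \<union> C') = rk \<B> E" using rk_Un_circuit_stressed [OF A(1) C'(1)] C'(3) by blast
      moreover have "rk \<B> (A \<union> C') \<le> rk \<B> F" using \<open>A \<subseteq> F\<close> C'(2) by (intro rk_mono) auto
      ultimately show False using rk_less by simp
    qed
  qed
  ultimately have "A = F" by blast
  then show ?thesis using A(1) by simp
qed

lemma card_Int_less_rk_cyclic_flats:
  assumes F: "proper_cyclic_flat E \<B> F" and G: "proper_cyclic_flat E \<B> G" and "F \<noteq> G"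
  shows "card (F \<inter> G) < rk \<B> F"
proof (rule ccontr)
  assume "\<not> card (F \<inter> G) < rk \<B> F"
  then have "F \<subseteq> G"
    using stressed_subset_flat [OF proper_cyclic_flat_stressed [OF F]] G
    unfolding proper_cyclic_flat_def cyclic_flat_def by simp
  then have "F \<subset> G" using \<open>F \<noteq> G\<close> by blast
  moreover have "\<not> F \<subset> G"
    using not_psubset_stressed rk_less_card_cyclic_flat [OF F] proper_cyclic_flat_stressed [OF G] F
    unfolding proper_cyclic_flat_def cyclic_flat_def by blast
  ultimately show False by blast
qed

lemma indep_Int_cyclic_flats:
  assumes F: "proper_cyclic_flat E \<B> F" and G: "proper_cyclic_flat E \<B> G" and "F \<noteq> G"
  shows "indep \<B> (F \<inter> G)"
  using stressed_indep_if_card_le [OF proper_cyclic_flat_stressed [OF F], of "F \<inter> G"]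
    card_Int_less_rk_cyclic_flats [OF assms] by simp

lemma rk_Un_cyclic_flats:
  assumes F: "proper_cyclic_flat E \<B> F" and G: "proper_cyclic_flat E \<B> G" and "F \<noteq> G"
  shows "rk \<B> (F \<union> G) = rk \<B> E"
proof -
  have cycG: "cyclic_flat E \<B> G" using G unfolding proper_cyclic_flat_def by blast
  have "\<not> G \<subseteq> F"
  proof
    assume "G \<subseteq> F"
    then have "indep \<B> G" using indep_Int_cyclic_flats [OF assms] by (simp add: Int_absorb1)
    then show False using rk_less_card_cyclic_flat [OF G] rk_indep by simp
  qed
  then obtain g where "g \<in> G" "g \<notin> F" by blast
  then obtain C where C: "circuit E \<B> C" "C \<subseteq> G" "g \<in> C"
    using cyclic_flat_covered_by_circuits [OF cycG] by blast
  have "rk \<B> (F \<union> C) = rk \<B> E"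
    using rk_Un_circuit_stressed [OF proper_cyclic_flat_stressed [OF F] C(1)] C(3) \<open>g \<notin> F\<close> by blast
  moreover have "rk \<B> (F \<union> C) \<le> rk \<B> (F \<union> G)" using C(2) by (intro rk_mono) auto
  ultimately show ?thesis using rk_le_rk_ground [of "F \<union> G"] by linarith
qed

lemma rk_ground_add_card_Int_le:
  assumes "proper_cyclic_flat E \<B> F" "proper_cyclic_flat E \<B> G" "F \<noteq> G"
  shows "rk \<B> E + card (F \<inter> G) \<le> rk \<B> F + rk \<B> G"
  using rk_submodular [of F G] rk_Un_cyclic_flats [OF assms] rk_indep [OF indep_Int_cyclic_flats [OF assms]]
  by simp

lemma modular_pair_cyclic_flats_iff:
  assumes "proper_cyclic_flat E \<B> F" "proper_cyclic_flat E \<B> G" "F \<noteq> G"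
  shows "modular_pair \<B> F G \<longleftrightarrow> rk \<B> F + rk \<B> G = rk \<B> E + card (F \<inter> G)"
  unfolding modular_pair_def
  using rk_Un_cyclic_flats [OF assms] rk_indep [OF indep_Int_cyclic_flats [OF assms]] by simp

end

theorem mainTheorem3:
  fixes n k r s :: nat and \<B> :: "nat set set" and F G :: "nat set"
  assumes split: "split_matroid {1..n} \<B>"
    and rank: "k = rk \<B> {1..n}"
    and F: "proper_cyclic_flat {1..n} \<B> F" and G: "proper_cyclic_flat {1..n} \<B> G"
    and FG: "F \<noteq> G"
    and r: "r = rk \<B> F" and s: "s = rk \<B> G"
  defines "Q \<equiv> hypersimplex (int k) {1..n} \<inter> Hge F (real r) \<inter> Hge G (real s)"
    and "\<alpha> \<equiv> card (F - G)" and "\<beta> \<equiv> card (G - F)" and "\<gamma> \<equiv> card (F \<inter> G)"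
  shows "(modular_pair \<B> F G \<longrightarrow>
            Q = simplex_product
                  [(int \<gamma>, F \<inter> G), (int r - int \<gamma>, F - G), (int s - int \<gamma>, G - F),
                   (0, {1..n} - (F \<union> G))]
          \<and> (\<exists>\<sigma> \<tau>. bij_betw \<sigma> {1..\<alpha>} (F - G) \<and> bij_betw \<tau> {1..\<beta>} (G - F) \<and>
                bij_betw (\<lambda>x. (restr {1..\<alpha>} (x \<circ> \<sigma>), restr {1..\<beta>} (x \<circ> \<tau>))) Q
                  (hypersimplex (int r - int \<gamma>) {1..\<alpha>} \<times> hypersimplex (int s - int \<gamma>) {1..\<beta>}))
          \<and> Q = hypersimplex (int k) {1..n} \<inter> Heq F (real r) \<inter> Heq G (real s))
       \<and> (\<not> modular_pair \<B> F G \<longrightarrow> Q = {})"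
proof -
  interpret split_basis_matroid "{1..n}" \<B> by (rule split_basis_matroid.intro [OF split])
  have FE: "F \<subseteq> {1..n}" and GE: "G \<subseteq> {1..n}"
    using F G unfolding proper_cyclic_flat_def cyclic_flat_def flat_def by blast+
  have fin: "finite {1..n}" by simp
  have le: "k + \<gamma> \<le> r + s" using rk_ground_add_card_Int_le [OF F G FG] rank r s \<gamma>_def by simp
  have modular_iff: "modular_pair \<B> F G \<longleftrightarrow> r + s = k + \<gamma>"
    using modular_pair_cyclic_flats_iff [OF F G FG] rank r s \<gamma>_def by simp
  show ?thesis
  proof (cases "r + s = k + \<gamma>")
    case True
    then obtain \<sigma> \<tau> where "bij_betw \<sigma> {1..\<alpha>} (F - G)" "bij_betw \<tau> {1..\<beta>} (G - F)"
      "bij_betw (\<lambda>x. (restr {1..\<alpha>} (x \<circ> \<sigma>), restr {1..\<beta>} (x \<circ> \<tau>))) Q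
        (hypersimplex (int r - int \<gamma>) {1..\<alpha>} \<times> hypersimplex (int s - int \<gamma>) {1..\<beta>})"
      using hypersimplex_Hge_pair_relabel [OF fin FE GE] unfolding Q_def \<alpha>_def \<beta>_def \<gamma>_def by blast
    then show ?thesis
      using True modular_iff hypersimplex_Hge_pair_eq_simplex_product [OF fin FE GE]
        hypersimplex_Hge_pair_eq_Heq [OF fin FE GE] unfolding Q_def \<gamma>_def by blast
  next
    case False
    then have "Q = {}"
      using hypersimplex_Hge_pair_empty [OF fin FE GE] le unfolding Q_def \<gamma>_def by simp
    then show ?thesis using modular_iff False by simp
  qed
qed

end
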